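(* Let $R=[x_1,x_2]\times[y_1,y_2]\subseteq\overline{\mathbb{R}}^2$ be an admissible rectangle and let $A$ be a real function defined on its four corners which is increasing in each variable on the corners, i.e. $A(x_1,y)\leqslant A(x_2,y)$ for $y\in\{y_1,y_2\}$ and $A(x,y_1)\leqslant A(x,y_2)$ for $x\in\{x_1,x_2\}$. Then the bilinear interpolation $A^{\mathrm{BL}}$ of $A$ on $R$ is nondecreasing in each variable on $R$. Moreover, for every subrectangle $R_1=[u_1,u_2]\times[v_1,v_2]\subseteq R$ (with $u_1<u_2$, $v_1<v_2$) we have, writing $V$ for the volume with respect to $A^{\mathrm{BL}}$: (a) $V(R_1)>0$ if and only if $V(R)>0$; (b) $V(R_1)<0$ if and only if $V(R)<0$; (c) $V(R_1)=0$ if and only if $V(R)=0$.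
   Context: $\overline{\mathbb{R}}=\mathbb{R}\cup\{-\infty,\infty\}$. An admissible rectangle is $[x_1,x_2]\times[y_1,y_2]$ with $x_1<x_2$, $y_1<y_2$ in $\overline{\mathbb{R}}$ such that in each coordinate at most one endpoint is infinite, and if $x_1=-\infty$ then $x_2$ is finite with $x_2<0$, if $x_2=\infty$ then $x_1$ is finite with $x_1>0$ (and the same for $y_1,y_2$). (Such rectangles are exactly the cells of a mesh $\delta_x\times\delta_y$ with $\delta_x=\{-\infty=x_0<\dots<x_p=\infty\}$, $\delta_y=\{-\infty=y_0<\dots<y_q=\infty\}$ each containing a finite strictly positive and a finite strictly negative point.) For an interval $[x_1,x_2]$ of this kind define weights $\lambda_1,\lambda_2$ on $[x_1,x_2]$: if $x_1,x_2$ are both finite, $\lambda_2(x)=\frac{x-x_1}{x_2-x_1}$; if $x_1=-\infty$, $\lambda_2(x)=\frac{x_2}{x}$ (equal to $0$ at $x=-\infty$); in these two cases $\lambda_1=1-\lambda_2$; if $x_2=\infty$, $\lambda_1(x)=\frac{x_1}{x}$ (equal to $0$ at $x=\infty$) and $\lambda_2=1-\lambda_1$. Define $\mu_1,\mu_2$ on $[y_1,y_2]$ in the same way. The bilinear interpolation of $A$ is $A^{\mathrm{BL}}(x,y)=\sum_{k,l\in\{1,2\}}\lambda_k(x)\mu_l(y)A(x_k,y_l)$; it is the unique function on $R$ agreeing with $A$ at the corners whose one-dimensional sections parallel to the axes are linear (between two finite endpoints) or linear rational with pole at $0$ (between a finite and an infinite endpoint). The volume of a rectangle $[u_1,u_2]\times[v_1,v_2]$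 with respect to a function $G$ is $V_G=G(u_1,v_1)+G(u_2,v_2)-G(u_2,v_1)-G(u_1,v_2)$. *)

theory Defs
  imports Complex_Main "HOL-Library.Extended_Real"
begin

definition admissible_interval :: "ereal \<Rightarrow> ereal \<Rightarrow> bool" where
  "admissible_interval a b \<longleftrightarrow> a < b \<and>
     (a = -\<infinity> \<longrightarrow> (b \<noteq> \<infinity> \<and> b \<noteq> -\<infinity> \<and> b < 0)) \<and>
     (b = \<infinity> \<longrightarrow> (a \<noteq> \<infinity> \<and> a \<noteq> -\<infinity> \<and> a > 0))"

definition admissible_rectangle :: "ereal \<Rightarrow> ereal \<Rightarrow> ereal \<Rightarrow> ereal \<Rightarrow> bool" where
  "admissible_rectangle x1 x2 y1 y2 \<longleftrightarrow> admissible_interval x1 x2 \<and> admissible_interval y1 y2"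

definition wt2 :: "ereal \<Rightarrow> ereal \<Rightarrow> ereal \<Rightarrow> real" where
  "wt2 a b x =
     (if a = -\<infinity> then (if x = -\<infinity> then 0 else real_of_ereal b / real_of_ereal x)
      else if b = \<infinity> then 1 - (if x = \<infinity> then 0 else real_of_ereal a / real_of_ereal x)
      else (real_of_ereal x - real_of_ereal a) / (real_of_ereal b - real_of_ereal a))"

definition wt1 :: "ereal \<Rightarrow> ereal \<Rightarrow> ereal \<Rightarrow> real" where
  "wt1 a b x =
     (if a = -\<infinity> then 1 - (if x = -\<infinity> then 0 else real_of_ereal b / real_of_ereal x)
      else if b = \<infinity> then (if x = \<infinity> then 0 else real_of_ereal a / real_of_ereal x)
      else 1 - (real_of_ereal x - real_of_ereal a) / (real_of_ereal b - real_of_ereal a))"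

definition bilin_interp ::
  "ereal \<Rightarrow> ereal \<Rightarrow> ereal \<Rightarrow> ereal \<Rightarrow> (ereal \<Rightarrow> ereal \<Rightarrow> real) \<Rightarrow> ereal \<Rightarrow> ereal \<Rightarrow> real" where
  "bilin_interp x1 x2 y1 y2 A x y =
       wt1 x1 x2 x * wt1 y1 y2 y * A x1 y1 + wt1 x1 x2 x * wt2 y1 y2 y * A x1 y2
     + wt2 x1 x2 x * wt1 y1 y2 y * A x2 y1 + wt2 x1 x2 x * wt2 y1 y2 y * A x2 y2"

definition volume_wrt :: "(ereal \<Rightarrow> ereal \<Rightarrow> real) \<Rightarrow> ereal \<Rightarrow> ereal \<Rightarrow> ereal \<Rightarrow> ereal \<Rightarrow> real" where
  "volume_wrt G u1 u2 v1 v2 = G u1 v1 + G u2 v2 - G u2 v1 - G u1 v2"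

end

theory Submission
  imports Defs
begin

text \<open>Writing \<open>\<lambda> = wt2 x1 x2\<close> and \<open>\<mu> = wt2 y1 y2\<close>, the interpolant is
\<open>A(x1,y1) + \<lambda>(x) (A(x2,y1) - A(x1,y1)) + \<mu>(y) (A(x1,y2) - A(x1,y1)) + \<lambda>(x) \<mu>(y) V\<close>, where
\<open>V\<close> is the volume of the corner values of \<open>A\<close>. On an admissible interval the weight
\<open>\<lambda>\<close> increases strictly from 0 to 1. Hence the volume of any subrectangle is \<open>V\<close> times
a product of two positive increments of the weights, which gives the sign statements,
and an increment of the interpolant in \<open>x\<close> is an increment of \<open>\<lambda>\<close> times a convex
combination of the increments of \<open>A\<close> along the two horizontal edges.\<close>

lemma wt1_eq_1_minus_wt2: "wt1 a b x = 1 - wt2 a b x"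
  unfolding wt1_def wt2_def by auto

lemma wt2_left [simp]: "admissible_interval a b \<Longrightarrow> wt2 a b a = 0"
  by (cases a; cases b) (auto simp: wt2_def admissible_interval_def)

lemma wt2_right [simp]: "admissible_interval a b \<Longrightarrow> wt2 a b b = 1"
  by (cases a; cases b) (auto simp: wt2_def admissible_interval_def)

lemma wt2_strict_mono_finite:
  fixes x x' :: ereal
  assumes "a < b" "ereal a \<le> x" "x < x'" "x' \<le> ereal b"
  shows "wt2 (ereal a) (ereal b) x < wt2 (ereal a) (ereal b) x'"
proof -
  obtain r r' where "x = ereal r" "x' = ereal r'" "r < r'"
    using assms by (cases x; cases x') auto
  then show ?thesis
    using assms by (simp add: wt2_def divide_strict_right_mono)
qed

lemma wt2_strict_mono_minf:
  assumes "b < 0" "x < x'" "x' \<le> ereal b"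
  shows "wt2 (-\<infinity>) (ereal b) x < wt2 (-\<infinity>) (ereal b) x'"
proof -
  obtain r' where x': "x' = ereal r'" "r' \<le> b"
    using assms by (cases x') auto
  show ?thesis
  proof (cases x)
    case (real r)
    with assms x' have "b / r < b / r'"
      by (simp add: divide_simps mult_less_cancel_left_neg)
    with real x' show ?thesis
      by (simp add: wt2_def)
  qed (use assms x' in \<open>auto simp: wt2_def divide_neg_neg\<close>)
qed

lemma wt2_strict_mono_pinf:
  assumes "0 < a" "ereal a \<le> x" "x < x'"
  shows "wt2 (ereal a) \<infinity> x < wt2 (ereal a) \<infinity> x'"
proof -
  obtain r where x: "x = ereal r" "a \<le> r"
    using assms by (cases x) auto
  show ?thesis
  proof (cases x')
    case (real r')
    with assms x have "a / r' < a / r"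
      by (simp add: divide_simps)
    with real x show ?thesis
      by (simp add: wt2_def)
  qed (use assms x in \<open>auto simp: wt2_def\<close>)
qed

lemma wt2_strict_mono:
  assumes "admissible_interval a b" "a \<le> x" "x < x'" "x' \<le> b"
  shows "wt2 a b x < wt2 a b x'"
  using assms wt2_strict_mono_finite wt2_strict_mono_minf wt2_strict_mono_pinf
  by (cases a; cases b) (auto simp: admissible_interval_def)

lemma wt2_mono:
  assumes "admissible_interval a b" "a \<le> x" "x \<le> x'" "x' \<le> b"
  shows "wt2 a b x \<le> wt2 a b x'"
  using wt2_strict_mono[of a b x x'] assms by (cases "x = x'") (auto simp: less_le)

lemma wt2_bounds:
  assumes "admissible_interval a b" "a \<le> x" "x \<le> b"
  shows "0 \<le> wt2 a b x" "wt2 a b x \<le> 1"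
  using wt2_mono[of a b a x] wt2_mono[of a b x b] assms by auto

lemma bilin_interp_eq:
  "bilin_interp x1 x2 y1 y2 A x y =
     A x1 y1 + wt2 x1 x2 x * (A x2 y1 - A x1 y1) + wt2 y1 y2 y * (A x1 y2 - A x1 y1)
     + wt2 x1 x2 x * wt2 y1 y2 y * volume_wrt A x1 x2 y1 y2"
  unfolding bilin_interp_def volume_wrt_def wt1_eq_1_minus_wt2 by (simp add: algebra_simps)

lemma bilin_interp_swap:
  "bilin_interp x1 x2 y1 y2 A x y = bilin_interp y1 y2 x1 x2 (\<lambda>y x. A x y) y x"
  unfolding bilin_interp_def by (simp add: algebra_simps)

lemma bilin_interp_mono_first:
  assumes "admissible_interval x1 x2" "admissible_interval y1 y2"
    and "A x1 y1 \<le> A x2 y1" "A x1 y2 \<le> A x2 y2"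
    and "x1 \<le> x" "x \<le> x'" "x' \<le> x2" "y1 \<le> y" "y \<le> y2"
  shows "bilin_interp x1 x2 y1 y2 A x y \<le> bilin_interp x1 x2 y1 y2 A x' y"
proof -
  let ?l = "wt2 x1 x2" and ?m = "wt2 y1 y2 y"
  have "bilin_interp x1 x2 y1 y2 A x' y - bilin_interp x1 x2 y1 y2 A x y =
      (?l x' - ?l x) * ((1 - ?m) * (A x2 y1 - A x1 y1) + ?m * (A x2 y2 - A x1 y2))"
    unfolding bilin_interp_eq volume_wrt_def by (simp add: algebra_simps)
  moreover have "0 \<le> ?l x' - ?l x"
    using wt2_mono assms by simp
  moreover have "0 \<le> (1 - ?m) * (A x2 y1 - A x1 y1) + ?m * (A x2 y2 - A x1 y2)"
    using wt2_bounds[of y1 y2 y] assms by simp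
  ultimately show ?thesis
    by (metis diff_ge_0_iff_ge mult_nonneg_nonneg)
qed

lemma volume_bilin_interp:
  "volume_wrt (bilin_interp x1 x2 y1 y2 A) u1 u2 v1 v2 =
     (wt2 x1 x2 u2 - wt2 x1 x2 u1) * (wt2 y1 y2 v2 - wt2 y1 y2 v1) * volume_wrt A x1 x2 y1 y2"
  unfolding volume_wrt_def[of "bilin_interp x1 x2 y1 y2 A"] bilin_interp_eq
  by (simp add: algebra_simps)

lemma volume_bilin_interp_whole:
  assumes "admissible_rectangle x1 x2 y1 y2"
  shows "volume_wrt (bilin_interp x1 x2 y1 y2 A) x1 x2 y1 y2 = volume_wrt A x1 x2 y1 y2"
  using assms by (simp add: volume_bilin_interp admissible_rectangle_def)

lemma sgn_volume_bilin_interp: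
  assumes "admissible_rectangle x1 x2 y1 y2"
    and "x1 \<le> u1" "u1 < u2" "u2 \<le> x2" "y1 \<le> v1" "v1 < v2" "v2 \<le> y2"
  shows "sgn (volume_wrt (bilin_interp x1 x2 y1 y2 A) u1 u2 v1 v2) =
         sgn (volume_wrt A x1 x2 y1 y2)"
proof -
  have "0 < wt2 x1 x2 u2 - wt2 x1 x2 u1" "0 < wt2 y1 y2 v2 - wt2 y1 y2 v1"
    using assms wt2_strict_mono by (auto simp: admissible_rectangle_def)
  then show ?thesis
    by (simp add: volume_bilin_interp sgn_mult)
qed

theorem corollary2:
  fixes x1 x2 y1 y2 :: ereal and A :: "ereal \<Rightarrow> ereal \<Rightarrow> real"
  assumes adm: "admissible_rectangle x1 x2 y1 y2"
    and incx: "\<And>y. y \<in> {y1, y2} \<Longrightarrow> A x1 y \<le> A x2 y"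
    and incy: "\<And>x. x \<in> {x1, x2} \<Longrightarrow> A x y1 \<le> A x y2"
  shows "(\<forall>x \<in> {x1..x2}. \<forall>x' \<in> {x1..x2}. \<forall>y \<in> {y1..y2}. x \<le> x' \<longrightarrow>
            bilin_interp x1 x2 y1 y2 A x y \<le> bilin_interp x1 x2 y1 y2 A x' y)
       \<and> (\<forall>x \<in> {x1..x2}. \<forall>y \<in> {y1..y2}. \<forall>y' \<in> {y1..y2}. y \<le> y' \<longrightarrow>
            bilin_interp x1 x2 y1 y2 A x y \<le> bilin_interp x1 x2 y1 y2 A x y')
       \<and> (\<forall>u1 u2 v1 v2. x1 \<le> u1 \<and> u1 < u2 \<and> u2 \<le> x2 \<and> y1 \<le> v1 \<and> v1 < v2 \<and> v2 \<le> y2 \<longrightarrow>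
            (volume_wrt (bilin_interp x1 x2 y1 y2 A) u1 u2 v1 v2 > 0 \<longleftrightarrow>
               volume_wrt (bilin_interp x1 x2 y1 y2 A) x1 x2 y1 y2 > 0)
          \<and> (volume_wrt (bilin_interp x1 x2 y1 y2 A) u1 u2 v1 v2 < 0 \<longleftrightarrow>
               volume_wrt (bilin_interp x1 x2 y1 y2 A) x1 x2 y1 y2 < 0)
          \<and> (volume_wrt (bilin_interp x1 x2 y1 y2 A) u1 u2 v1 v2 = 0 \<longleftrightarrow>
               volume_wrt (bilin_interp x1 x2 y1 y2 A) x1 x2 y1 y2 = 0))"
proof (intro conjI ballI allI impI)
  have ax: "admissible_interval x1 x2" and ay: "admissible_interval y1 y2"
    using adm by (auto simp: admissible_rectangle_def)
  show "bilin_interp x1 x2 y1 y2 A x y \<le> bilin_interp x1 x2 y1 y2 A x' y"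
    if "x \<in> {x1..x2}" "x' \<in> {x1..x2}" "y \<in> {y1..y2}" "x \<le> x'" for x x' y
    using bilin_interp_mono_first[OF ax ay] incx that by simp
  show "bilin_interp x1 x2 y1 y2 A x y \<le> bilin_interp x1 x2 y1 y2 A x y'"
    if "x \<in> {x1..x2}" "y \<in> {y1..y2}" "y' \<in> {y1..y2}" "y \<le> y'" for x y y'
    using bilin_interp_mono_first[OF ay ax, of "\<lambda>y x. A x y"] incy that
    by (simp add: bilin_interp_swap[of x1 x2 y1 y2 A])
  fix u1 u2 v1 v2
  assume "x1 \<le> u1 \<and> u1 < u2 \<and> u2 \<le> x2 \<and> y1 \<le> v1 \<and> v1 < v2 \<and> v2 \<le> y2"
  then have sgn_eq: "sgn (volume_wrt (bilin_interp x1 x2 y1 y2 A) u1 u2 v1 v2) =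
      sgn (volume_wrt (bilin_interp x1 x2 y1 y2 A) x1 x2 y1 y2)"
    using sgn_volume_bilin_interp[OF adm] volume_bilin_interp_whole[OF adm] by simp
  show "volume_wrt (bilin_interp x1 x2 y1 y2 A) u1 u2 v1 v2 > 0 \<longleftrightarrow>
      volume_wrt (bilin_interp x1 x2 y1 y2 A) x1 x2 y1 y2 > 0"
    by (metis sgn_eq sgn_greater)
  show "volume_wrt (bilin_interp x1 x2 y1 y2 A) u1 u2 v1 v2 < 0 \<longleftrightarrow>
      volume_wrt (bilin_interp x1 x2 y1 y2 A) x1 x2 y1 y2 < 0"
    by (metis sgn_eq sgn_less)
  show "volume_wrt (bilin_interp x1 x2 y1 y2 A) u1 u2 v1 v2 = 0 \<longleftrightarrow>
      volume_wrt (bilin_interp x1 x2 y1 y2 A) x1 x2 y1 y2 = 0"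
    by (metis sgn_eq sgn_eq_0_iff)
qed

end
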